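(* Let $n\ge2$, $\nu\in\mathbb{C}$, $k\in\mathbb{C}$ with $nk\notin\{-1,-2,\dots\}$. The function \[ \varphi(z)=(y_1\cdots y_{n-1})^{-\nu/n}F_D\bigl(-\nu,k,\dots,k,nk;\,1-y_1,\dots,1-y_{n-1}\bigr),\qquad y_i=z_i/z_n\ (1\le i\le n-1), \] (defined near $z=(1,\dots,1)$ in $\mathbb{R}^n_{>0}$) is invariant under the action of $S_n$ permuting the coordinates $z_1,\dots,z_n$.
   Context: Lauricella's $F_D$ in $m=n-1$ variables: for $\gamma\notin\{0,-1,-2,\dots\}$, $F_D(\alpha,\beta_1,\dots,\beta_m,\gamma;x)$ is the analytic continuation of $\sum_{m_1,\dots,m_m\ge0}\frac{(\alpha)_{|m|}(\beta_1)_{m_1}\cdots(\beta_m)_{m_m}}{(\gamma)_{|m|}m_1!\cdots m_m!}x_1^{m_1}\cdots x_m^{m_m}$, $|m|=m_1+\dots+m_m$, $(a)_0=1$, $(a)_j=a(a+1)\cdots(a+j-1)$. Here all $\beta_i$ equal $k$. *)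

theory Defs
  imports "HOL-Analysis.Analysis"
begin

text \<open>Near x = 0 (polydisc |x_i| < 1) this series converges absolutely and is the
  function itself; only this region is used below.\<close>
definition lauricella_FD ::
  "nat \<Rightarrow> complex \<Rightarrow> (nat \<Rightarrow> complex) \<Rightarrow> complex \<Rightarrow> (nat \<Rightarrow> complex) \<Rightarrow> complex" where
  "lauricella_FD d \<alpha> \<beta> \<gamma> x =
     (\<Sum>\<^sub>\<infinity> m \<in> {m :: nat \<Rightarrow> nat. \<forall>i\<ge>d. m i = 0}.
        pochhammer \<alpha> (\<Sum>i<d. m i) * (\<Prod>i<d. pochhammer (\<beta> i) (m i))
        / (pochhammer \<gamma> (\<Sum>i<d. m i) * (\<Prod>i<d. fact (m i)))
        * (\<Prod>i<d. x i ^ m i))"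

text \<open>The function phi on z = (z_0,...,z_{n-1}) (0-based; z_{n-1} plays the role of z_n),
  with y_i = z_i / z_{n-1}.\<close>
definition phi :: "nat \<Rightarrow> complex \<Rightarrow> complex \<Rightarrow> (nat \<Rightarrow> real) \<Rightarrow> complex" where
  "phi n \<nu> k z =
     (complex_of_real (\<Prod>i<n-1. z i / z (n-1))) powr (- \<nu> / of_nat n)
     * lauricella_FD (n-1) (- \<nu>) (\<lambda>_. k) (of_nat n * k)
         (\<lambda>i. complex_of_real (1 - z i / z (n-1)))"

end

theory Submission
  imports Defs "HOL-Complex_Analysis.Complex_Analysis"
begin

(*
  Put y_i = z_i / z_n for all i \<le> n.  The n-variable series
  F_D(-\<nu>; k, ..., k; nk; 1 - y_1, ..., 1 - y_n) has last argument 1 - y_n = 0, so it is the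
  (n-1)-variable series in phi.  Because the \<beta>_i add up to \<gamma>, F_D is homogeneous near the
  point 1: F_D(\<alpha>; \<beta>; \<gamma>; 1 - t w) = t^(-\<alpha>) F_D(\<alpha>; \<beta>; \<gamma>; 1 - w).  Indeed g(t) = F_D(1 - t w) may be
  differentiated termwise, and the contiguity relation between the coefficients at m and at
  m + e_j, summed over j, turns t g'(t) into -\<alpha> g(t); hence t^\<alpha> g(t) is constant.  With
  t = 1/z_n this gives phi(z) = (z_1 \<cdots> z_n)^(-\<nu>/n) F_D(-\<nu>; k, ..., k; nk; 1 - z_1, ..., 1 - z_n),
  which is visibly symmetric since all \<beta>_i are equal.
*)

lemma has_sum_diff:
  fixes f g :: "'a \<Rightarrow> 'b::topological_ab_group_add"
  assumes "(f has_sum a) A" "(g has_sum b) A"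
  shows "((\<lambda>x. f x - g x) has_sum (a - b)) A"
  using has_sum_add[OF assms(1), of "\<lambda>x. - g x" "- b"] assms(2) by (simp add: has_sum_uminus)

lemma has_sum_sum:
  fixes f :: "'i \<Rightarrow> 'a \<Rightarrow> 'b::topological_comm_monoid_add"
  assumes "finite I" "\<And>i. i \<in> I \<Longrightarrow> (f i has_sum s i) A"
  shows "((\<lambda>x. \<Sum>i\<in>I. f i x) has_sum (\<Sum>i\<in>I. s i)) A"
  using assms by (induction I rule: finite_induct) (auto intro: has_sum_add)

lemma summable_on_norm_bound:
  fixes f :: "'a \<Rightarrow> 'b::banach"
  assumes "M summable_on A" "\<And>x. x \<in> A \<Longrightarrow> norm (f x) \<le> M x"
  shows "f summable_on A"
  using Infinite_Sum.abs_summable_on_comparison_test'[OF assms] by (rule abs_summable_summable)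

lemma has_field_derivative_infsum:
  fixes f f' :: "'a \<Rightarrow> complex \<Rightarrow> complex"
  assumes "M summable_on A" "r > 0"
    and bound: "\<And>x t. x \<in> A \<Longrightarrow> t \<in> cball z r \<Longrightarrow> norm (f x t) \<le> M x"
    and cont: "\<And>x. x \<in> A \<Longrightarrow> continuous_on (cball z r) (f x)"
    and deriv: "\<And>x t. x \<in> A \<Longrightarrow> t \<in> ball z r \<Longrightarrow> (f x has_field_derivative f' x t) (at t)"
    and t: "t \<in> ball z r"
  shows "(\<lambda>x. f' x t) summable_on A"
    and "((\<lambda>s. \<Sum>\<^sub>\<infinity>x\<in>A. f x s) has_field_derivative (\<Sum>\<^sub>\<infinity>x\<in>A. f' x t)) (at t)"
proof -
  have ulim: "uniform_limit (cball z r) (\<lambda>X s. \<Sum>x\<in>X. f x s) (\<lambda>s. \<Sum>\<^sub>\<infinity>x\<in>A. f x s)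
      (finite_subsets_at_top A)"
    using bound \<open>M summable_on A\<close> by (rule Weierstrass_m_test_general)
  have partial_sums: "\<forall>\<^sub>F X in finite_subsets_at_top A. continuous_on (cball z r) (\<lambda>s. \<Sum>x\<in>X. f x s)
      \<and> (\<forall>t\<in>ball z r. ((\<lambda>s. \<Sum>x\<in>X. f x s) has_field_derivative (\<Sum>x\<in>X. f' x t)) (at t))"
    using cont deriv
    by (intro eventually_finite_subsets_at_top_weakI) (auto intro!: continuous_on_sum DERIV_sum)
  obtain g' where g': "\<And>t. t \<in> ball z r \<Longrightarrow>
      ((\<lambda>s. \<Sum>\<^sub>\<infinity>x\<in>A. f x s) has_field_derivative g' t) (at t)
      \<and> ((\<lambda>X. \<Sum>x\<in>X. f' x t) \<longlongrightarrow> g' t) (finite_subsets_at_top A)"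
    by (rule has_complex_derivative_uniform_limit[OF partial_sums ulim
          finite_subsets_at_top_neq_bot \<open>r > 0\<close>]) blast
  then have "((\<lambda>x. f' x t) has_sum g' t) A"
    using t by (simp add: has_sum_def)
  with g'[OF t] show "(\<lambda>x. f' x t) summable_on A"
    and "((\<lambda>s. \<Sum>\<^sub>\<infinity>x\<in>A. f x s) has_field_derivative (\<Sum>\<^sub>\<infinity>x\<in>A. f' x t)) (at t)"
    by (auto simp: has_sum_iff)
qed

lemma prod_fun_upd_remove:
  assumes "finite A" "j \<in> A"
  shows "(\<Prod>i\<in>A. g i ((m(j := e)) i)) = g j e * (\<Prod>i\<in>A - {j}. g i (m i))"
proof -
  have "(\<Prod>i\<in>A. g i ((m(j := e)) i)) = g j e * (\<Prod>i\<in>A - {j}. g i ((m(j := e)) i))"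
    using prod.remove[OF assms, of "\<lambda>i. g i ((m(j := e)) i)"] by simp
  also have "(\<Prod>i\<in>A - {j}. g i ((m(j := e)) i)) = (\<Prod>i\<in>A - {j}. g i (m i))"
    by (rule prod.cong) auto
  finally show ?thesis .
qed

lemma sum_fun_upd_remove:
  assumes "finite A" "j \<in> A"
  shows "(\<Sum>i\<in>A. (m(j := e)) i) = e + (\<Sum>i\<in>A - {j}. m i)"
proof -
  have "(\<Sum>i\<in>A. (m(j := e)) i) = e + (\<Sum>i\<in>A - {j}. (m(j := e)) i)"
    using sum.remove[OF assms, of "m(j := e)"] by simp
  also have "(\<Sum>i\<in>A - {j}. (m(j := e)) i) = (\<Sum>i\<in>A - {j}. m i)"
    by (rule sum.cong) auto
  finally show ?thesis .
qed

lemma geometric_bound_of_eventual_ratio: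
  fixes f :: "nat \<Rightarrow> real"
  assumes nonneg: "\<And>N. f N \<ge> 0" and "l > 0"
    and ratio: "\<And>N. N \<ge> N\<^sub>0 \<Longrightarrow> f (Suc N) \<le> l * f N"
  shows "\<exists>C\<ge>0. \<forall>N. f N \<le> C * l ^ N"
proof -
  define C where "C = (\<Sum>j\<le>N\<^sub>0. f j / l ^ j)"
  have initial: "f j \<le> C * l ^ j" if "j \<le> N\<^sub>0" for j
  proof -
    have "f j / l ^ j \<le> C"
      unfolding C_def using that nonneg \<open>l > 0\<close> by (intro member_le_sum) auto
    then show ?thesis using \<open>l > 0\<close> by (simp add: divide_le_eq)
  qed
  have tail: "f (N\<^sub>0 + d) \<le> C * l ^ (N\<^sub>0 + d)" for d
  proof (induction d)
    case (Suc d)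
    have "f (N\<^sub>0 + Suc d) \<le> l * f (N\<^sub>0 + d)" using ratio[of "N\<^sub>0 + d"] by simp
    also have "\<dots> \<le> l * (C * l ^ (N\<^sub>0 + d))" using Suc \<open>l > 0\<close> by simp
    finally show ?case by (simp add: algebra_simps)
  qed (simp add: initial)
  have "f N \<le> C * l ^ N" for N
    using initial[of N] tail[of "N - N\<^sub>0"] by (cases "N \<le> N\<^sub>0") simp_all
  moreover have "C \<ge> 0" unfolding C_def using nonneg \<open>l > 0\<close> by (intro sum_nonneg) auto
  ultimately show ?thesis by blast
qed

lemma eventually_norm_add_of_nat_le:
  fixes a b :: complex
  assumes "l > 1"
  shows "\<exists>N\<^sub>0. \<forall>N\<ge>N\<^sub>0. norm (a + of_nat N) \<le> l * norm (b + of_nat N)"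
proof -
  define N\<^sub>0 where "N\<^sub>0 = nat \<lceil>(norm a + l * norm b) / (l - 1)\<rceil>"
  have "norm (a + of_nat N) \<le> l * norm (b + of_nat N)" if "N \<ge> N\<^sub>0" for N
  proof -
    have "real N \<ge> (norm a + l * norm b) / (l - 1)"
      using that unfolding N\<^sub>0_def by linarith
    then have "norm a + l * norm b \<le> (l - 1) * real N"
      using assms by (simp add: field_simps)
    moreover have "norm (a + of_nat N) \<le> norm a + real N"
      using norm_triangle_ineq[of a "of_nat N"] by simp
    moreover have "l * (real N - norm b) \<le> l * norm (b + of_nat N)"
      using norm_triangle_ineq[of "b + of_nat N" "- b"] assms by (intro mult_left_mono) auto
    ultimately show ?thesis by (simp add: algebra_simps)
  qed
  then show ?thesis by blast
qed

lemma pochhammer_ratio_geometric_bound: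
  fixes a b :: complex
  assumes "l > 1"
  shows "\<exists>C\<ge>0. \<forall>N. norm (pochhammer a N) / norm (pochhammer b N) \<le> C * l ^ N"
proof -
  obtain N\<^sub>0 where N\<^sub>0: "\<And>N. N \<ge> N\<^sub>0 \<Longrightarrow> norm (a + of_nat N) \<le> l * norm (b + of_nat N)"
    using eventually_norm_add_of_nat_le[OF assms] by blast
  show ?thesis
  proof (rule geometric_bound_of_eventual_ratio[where N\<^sub>0 = N\<^sub>0])
    fix N assume "N \<ge> N\<^sub>0"
    (* if b + N = 0 the quotient is 0, by the convention x / 0 = 0 *)
    then have "norm (a + of_nat N) / norm (b + of_nat N) \<le> l"
      using N\<^sub>0 assms by (cases "b + of_nat N = 0") (simp_all add: divide_le_eq)
    then have "norm (pochhammer a N) / norm (pochhammer b N) * (norm (a + of_nat N) / norm (b + of_nat N))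
        \<le> norm (pochhammer a N) / norm (pochhammer b N) * l"
      by (intro mult_left_mono) auto
    then show "norm (pochhammer a (Suc N)) / norm (pochhammer b (Suc N))
        \<le> l * (norm (pochhammer a N) / norm (pochhammer b N))"
      by (simp add: pochhammer_Suc norm_mult mult.commute)
  qed (use assms in auto)
qed

lemma linear_geometric_bound:
  assumes "l > (1::real)"
  shows "\<exists>C\<ge>0. \<forall>N. real N + 1 \<le> C * l ^ N"
proof (rule geometric_bound_of_eventual_ratio[where N\<^sub>0 = "nat \<lceil>1 / (l - 1)\<rceil>"])
  fix N assume "N \<ge> nat \<lceil>1 / (l - 1)\<rceil>"
  then have "1 \<le> (l - 1) * real N" using assms by (simp add: field_simps)
  then show "real (Suc N) + 1 \<le> l * (real N + 1)" using assms by (simp add: algebra_simps)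
qed (use assms in auto)

lemma norm_one_minus_mult_le_half:
  fixes s w :: "'a::real_normed_field"
  assumes "norm (1 - w) \<le> 1/8" "norm (1 - s) \<le> 1/4"
  shows "norm (1 - s * w) \<le> 1/2"
proof -
  have "norm w \<le> 9/8"
    using assms(1) norm_triangle_ineq[of 1 "w - 1"] by (simp add: norm_minus_commute)
  then have "norm ((1 - s) * w) \<le> 1/4 * (9/8)"
    unfolding norm_mult using assms(2) by (intro mult_mono) auto
  moreover have "norm (1 - s * w) \<le> norm (1 - w) + norm ((1 - s) * w)"
    using norm_triangle_ineq[of "1 - w" "(1 - s) * w"] by (simp add: algebra_simps)
  ultimately show ?thesis using assms(1) by simp
qed

lemma norm_one_minus_inverse_lt:
  fixes c :: real
  assumes "\<bar>c - 1\<bar> < 1/8"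
  shows "norm (1 - complex_of_real (1 / c)) < 1/4"
proof -
  have "c > 7/8" using assms unfolding abs_less_iff by linarith
  then have "1 - complex_of_real (1 / c) = complex_of_real ((c - 1) / c)"
    by (simp add: field_simps)
  then have "norm (1 - complex_of_real (1 / c)) = \<bar>(c - 1) / c\<bar>"
    by (simp only: norm_of_real)
  also have "\<dots> < 1/4"
    using assms \<open>c > 7/8\<close> by (simp add: abs_div pos_divide_less_eq)
  finally show ?thesis .
qed

lemma powr_of_real_pos: "a > 0 \<Longrightarrow> complex_of_real a powr w = exp (w * of_real (ln a))"
  by (simp add: powr_def Ln_of_real)

lemma powr_of_real_div_power_cancel:
  fixes a c :: real and s :: complex
  assumes "a > 0" "c > 0" "n > 0"
  shows "of_real (a / c ^ n) powr (- s / of_nat n) * of_real (1 / c) powr s = of_real a powr (- s / of_nat n)"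
proof -
  have "- s / of_nat n * of_real (ln (a / c ^ n)) + s * of_real (ln (1 / c)) = - s / of_nat n * of_real (ln a)"
    using assms by (simp add: ln_div ln_realpow field_simps)
  moreover have "a / c ^ n > 0" "1 / c > 0" using assms by simp_all
  ultimately show ?thesis
    using assms by (simp only: powr_of_real_pos exp_add[symmetric])
qed

section \<open>Multi-indices\<close>

definition multi_index :: "nat \<Rightarrow> (nat \<Rightarrow> nat) set" where
  "multi_index d = {m. \<forall>i\<ge>d. m i = 0}"

definition multi_power :: "nat \<Rightarrow> (nat \<Rightarrow> 'a::comm_monoid_mult) \<Rightarrow> (nat \<Rightarrow> nat) \<Rightarrow> 'a" where
  "multi_power d x m = (\<Prod>i<d. x i ^ m i)"

lemma summable_on_power_multi_index:
  fixes q :: real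
  assumes q: "0 \<le> q" "q < 1"
  shows "(\<lambda>m. q ^ (\<Sum>i<d. m i)) summable_on multi_index d"
proof (rule nonneg_bdd_above_summable_on)
  have "(\<Sum>m\<in>F. q ^ (\<Sum>i<d. m i)) \<le> (1 / (1 - q)) ^ d"
    if F: "finite F" "F \<subseteq> multi_index d" for F
  proof -
    define M where "M = (\<Sum>m\<in>F. \<Sum>i<d. m i)"
    have le_M: "m i \<le> M" if "m \<in> F" "i < d" for m i
      using that F member_le_sum[of i "{..<d}" m] member_le_sum[of m F "\<lambda>m. \<Sum>i<d. m i"]
      unfolding M_def by auto
    have "inj_on (\<lambda>m. restrict m {..<d}) F"
    proof (intro inj_onI ext)
      fix m m' i
      assume m: "m \<in> F" "m' \<in> F" and eq: "restrict m {..<d} = restrict m' {..<d}"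
      show "m i = m' i"
      proof (cases "i < d")
        case True
        then show ?thesis using fun_cong[OF eq, of i] by simp
      next
        case False
        then show ?thesis
          using m F(2) unfolding multi_index_def by (metis (mono_tags) CollectD not_less subsetD)
      qed
    qed
    then have "(\<Sum>m\<in>F. q ^ (\<Sum>i<d. m i)) = (\<Sum>g\<in>(\<lambda>m. restrict m {..<d}) ` F. \<Prod>i<d. q ^ g i)"
      by (simp add: sum.reindex power_sum)
    also have "\<dots> \<le> (\<Sum>g\<in>PiE {..<d} (\<lambda>_. {..M}). \<Prod>i<d. q ^ g i)"
    proof (rule sum_mono2)
      show "(\<lambda>m. restrict m {..<d}) ` F \<subseteq> PiE {..<d} (\<lambda>_. {..M})"
        using le_M by (intro image_subsetI) (auto simp: restrict_PiE_iff simp del: restrict_apply)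
    qed (use q in \<open>auto intro!: finite_PiE prod_nonneg\<close>)
    also have "\<dots> = (\<Prod>i<d. \<Sum>j\<le>M. q ^ j)"
      by (subst prod_sum_PiE) auto
    also have "\<dots> \<le> (\<Prod>i<d. 1 / (1 - q))"
    proof (intro prod_mono conjI)
      have "(\<Sum>j\<le>M. q ^ j) = (1 - q ^ Suc M) / (1 - q)"
        using q by (subst lessThan_Suc_atMost[symmetric], subst sum_gp_strict) auto
      also have "\<dots> \<le> 1 / (1 - q)" using q by (intro divide_right_mono) auto
      finally show "(\<Sum>j\<le>M. q ^ j) \<le> 1 / (1 - q)" .
    qed (use q in \<open>auto intro: sum_nonneg\<close>)
    finally show ?thesis by simp
  qed
  then show "bdd_above (sum (\<lambda>m. q ^ (\<Sum>i<d. m i)) ` {F. F \<subseteq> multi_index d \<and> finite F})"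
    by (intro bdd_aboveI2[where M = "(1 / (1 - q)) ^ d"]) auto
qed (use q in auto)

lemma has_sum_multi_index_shift:
  assumes "j < d" and vanish: "\<And>m. m \<in> multi_index d \<Longrightarrow> m j = 0 \<Longrightarrow> f m = 0"
  shows "(f has_sum s) (multi_index d) \<longleftrightarrow> ((\<lambda>m. f (m(j := Suc (m j)))) has_sum s) (multi_index d)"
proof -
  define P where "P = {m \<in> multi_index d. m j > 0}"
  have "(f has_sum s) (multi_index d) \<longleftrightarrow> (f has_sum s) P"
    by (rule has_sum_cong_neutral) (use vanish in \<open>auto simp: P_def\<close>)
  also have "\<dots> \<longleftrightarrow> ((\<lambda>m. f (m(j := Suc (m j)))) has_sum s) (multi_index d)"
    by (rule has_sum_reindex_bij_witness[symmetric, where j = "\<lambda>m. m(j := Suc (m j))"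
          and i = "\<lambda>m. m(j := m j - 1)"])
      (use \<open>j < d\<close> in \<open>auto simp: P_def multi_index_def\<close>)
  finally show ?thesis .
qed

lemma multi_power_fun_upd_Suc:
  "j < d \<Longrightarrow> multi_power d x (m(j := Suc (m j))) = x j * multi_power d x m"
  using prod_fun_upd_remove[of "{..<d}" j "\<lambda>i e. x i ^ e" m "Suc (m j)"]
    prod.remove[of "{..<d}" j "\<lambda>i. x i ^ m i"]
  by (simp add: multi_power_def mult.assoc)

lemma multi_power_fun_upd_pred:
  "j < d \<Longrightarrow> m j > 0 \<Longrightarrow> x j * multi_power d x (m(j := m j - 1)) = multi_power d x m"
  using multi_power_fun_upd_Suc[of j d x "m(j := m j - 1)"] by simp

lemma norm_multi_power_le:
  fixes x :: "nat \<Rightarrow> 'a::real_normed_field"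
  assumes "\<And>i. i < d \<Longrightarrow> norm (x i) \<le> r"
  shows "norm (multi_power d x m) \<le> r ^ (\<Sum>i<d. m i)"
proof -
  have "norm (multi_power d x m) = (\<Prod>i<d. norm (x i) ^ m i)"
    by (simp add: multi_power_def prod_norm[symmetric] norm_power)
  also have "\<dots> \<le> (\<Prod>i<d. r ^ m i)"
    using assms by (intro prod_mono) (auto intro: power_mono)
  finally show ?thesis by (simp add: power_sum)
qed

lemma has_field_derivative_multi_power_affine:
  fixes w :: "nat \<Rightarrow> 'a::real_normed_field"
  shows "((\<lambda>t. multi_power d (\<lambda>i. 1 - t * w i) m) has_field_derivative
           (\<Sum>j<d. - of_nat (m j) * w j * multi_power d (\<lambda>i. 1 - t * w i) (m(j := m j - 1)))) (at t)"
proof -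
  have "((\<lambda>t. \<Prod>i<d. (1 - t * w i) ^ m i) has_field_derivative
      (\<Sum>j<d. (of_nat (m j) * (1 - t * w j) ^ (m j - 1) * - w j)
               * (\<Prod>i\<in>{..<d} - {j}. (1 - t * w i) ^ m i))) (at t)"
    by (rule has_field_derivative_prod) (auto intro!: derivative_eq_intros)
  also have "(\<Sum>j<d. (of_nat (m j) * (1 - t * w j) ^ (m j - 1) * - w j)
               * (\<Prod>i\<in>{..<d} - {j}. (1 - t * w i) ^ m i))
      = (\<Sum>j<d. - of_nat (m j) * w j * multi_power d (\<lambda>i. 1 - t * w i) (m(j := m j - 1)))"
  proof (rule sum.cong)
    fix j assume "j \<in> {..<d}"
    then show "(of_nat (m j) * (1 - t * w j) ^ (m j - 1) * - w j)
               * (\<Prod>i\<in>{..<d} - {j}. (1 - t * w i) ^ m i)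
        = - of_nat (m j) * w j * multi_power d (\<lambda>i. 1 - t * w i) (m(j := m j - 1))"
      using prod_fun_upd_remove[of "{..<d}" j "\<lambda>i e. (1 - t * w i) ^ e" m "m j - 1"]
      by (simp add: multi_power_def)
  qed simp
  finally show ?thesis unfolding multi_power_def .
qed

lemma euler_operator_multi_power_affine:
  fixes w :: "nat \<Rightarrow> 'a::comm_ring_1" and t :: 'a
  defines "u \<equiv> \<lambda>i. 1 - t * w i"
  shows "t * (\<Sum>j<d. - of_nat (m j) * w j * multi_power d u (m(j := m j - 1)))
    = of_nat (\<Sum>i<d. m i) * multi_power d u m - (\<Sum>j<d. of_nat (m j) * multi_power d u (m(j := m j - 1)))"
proof -
  have summand: "t * (- of_nat (m j) * w j * multi_power d u (m(j := m j - 1)))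
      = of_nat (m j) * multi_power d u m - of_nat (m j) * multi_power d u (m(j := m j - 1))"
    if "j < d" for j
  proof (cases "m j = 0")
    case False
    then have "of_nat (m j) * multi_power d u m
        = of_nat (m j) * (u j * multi_power d u (m(j := m j - 1)))"
      using multi_power_fun_upd_pred[OF \<open>j < d\<close>, of m u] by simp
    then show ?thesis by (simp add: u_def algebra_simps)
  qed simp
  have "t * (\<Sum>j<d. - of_nat (m j) * w j * multi_power d u (m(j := m j - 1)))
      = (\<Sum>j<d. of_nat (m j) * multi_power d u m - of_nat (m j) * multi_power d u (m(j := m j - 1)))"
    unfolding sum_distrib_left by (rule sum.cong[OF refl], rule summand) simp
  then show ?thesis
    by (simp add: sum_subtractf sum_distrib_right of_nat_sum)
qed

section \<open>The Lauricella series\<close>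

definition lauricella_coeff ::
  "nat \<Rightarrow> complex \<Rightarrow> (nat \<Rightarrow> complex) \<Rightarrow> complex \<Rightarrow> (nat \<Rightarrow> nat) \<Rightarrow> complex" where
  "lauricella_coeff d \<alpha> \<beta> \<gamma> m =
     pochhammer \<alpha> (\<Sum>i<d. m i) * (\<Prod>i<d. pochhammer (\<beta> i) (m i))
     / (pochhammer \<gamma> (\<Sum>i<d. m i) * (\<Prod>i<d. fact (m i)))"

lemma lauricella_FD_altdef:
  "lauricella_FD d \<alpha> \<beta> \<gamma> x
     = (\<Sum>\<^sub>\<infinity>m\<in>multi_index d. lauricella_coeff d \<alpha> \<beta> \<gamma> m * multi_power d x m)"
  unfolding lauricella_FD_def lauricella_coeff_def multi_index_def multi_power_def ..

lemma norm_lauricella_coeff: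
  "norm (lauricella_coeff d \<alpha> \<beta> \<gamma> m)
     = norm (pochhammer \<alpha> (\<Sum>i<d. m i)) / norm (pochhammer \<gamma> (\<Sum>i<d. m i))
       * (\<Prod>i<d. norm (pochhammer (\<beta> i) (m i)) / norm (pochhammer 1 (m i) :: complex))"
  by (simp add: lauricella_coeff_def norm_mult norm_divide prod_dividef prod_norm pochhammer_fact)

lemma summable_on_lauricella_coeff:
  assumes r: "0 \<le> r" "r < 1"
  shows "(\<lambda>m. norm (lauricella_coeff d \<alpha> \<beta> \<gamma> m) * (real (\<Sum>i<d. m i) + 1) * r ^ (\<Sum>i<d. m i))
           summable_on multi_index d"
proof -
  define l where "l = root 3 (2 / (1 + r))"  (* so that l ^ 3 * r = 2 r / (1 + r) < 1 *)
  have l: "l > 1" "l ^ 3 * r < 1"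
    using r by (simp_all add: l_def field_simps)
  obtain C\<^sub>0 where C\<^sub>0: "C\<^sub>0 \<ge> 0"
    "\<And>N. norm (pochhammer \<alpha> N) / norm (pochhammer \<gamma> N) \<le> C\<^sub>0 * l ^ N"
    using pochhammer_ratio_geometric_bound[OF l(1)] by blast
  have "\<forall>i. \<exists>c\<ge>0. \<forall>j. norm (pochhammer (\<beta> i) j) / norm (pochhammer 1 j :: complex) \<le> c * l ^ j"
    using pochhammer_ratio_geometric_bound[OF l(1)] by blast
  then obtain C where C: "\<And>i. C i \<ge> 0"
    "\<And>i j. norm (pochhammer (\<beta> i) j) / norm (pochhammer 1 j :: complex) \<le> C i * l ^ j"
    by metis
  obtain C\<^sub>1 where C\<^sub>1: "C\<^sub>1 \<ge> 0" "\<And>N. real N + 1 \<le> C\<^sub>1 * l ^ N"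
    using linear_geometric_bound[OF l(1)] by blast
  define K where "K = C\<^sub>0 * (\<Prod>i<d. C i) * C\<^sub>1"
  have bound: "norm (lauricella_coeff d \<alpha> \<beta> \<gamma> m) * (real (\<Sum>i<d. m i) + 1) * r ^ (\<Sum>i<d. m i)
      \<le> K * (l ^ 3 * r) ^ (\<Sum>i<d. m i)" for m
  proof -
    define N where "N = (\<Sum>i<d. m i)"
    have "(\<Prod>i<d. norm (pochhammer (\<beta> i) (m i)) / norm (pochhammer 1 (m i) :: complex))
        \<le> (\<Prod>i<d. C i * l ^ m i)"
      using C by (intro prod_mono) auto
    also have "\<dots> = (\<Prod>i<d. C i) * l ^ N"
      by (simp add: prod.distrib power_sum N_def)
    finally have "norm (lauricella_coeff d \<alpha> \<beta> \<gamma> m) \<le> (C\<^sub>0 * l ^ N) * ((\<Prod>i<d. C i) * l ^ N)"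
      unfolding norm_lauricella_coeff N_def[symmetric] using C\<^sub>0 l(1)
      by (intro mult_mono) (auto intro: prod_nonneg)
    then have "norm (lauricella_coeff d \<alpha> \<beta> \<gamma> m) * (real N + 1) * r ^ N
        \<le> (C\<^sub>0 * l ^ N) * ((\<Prod>i<d. C i) * l ^ N) * (C\<^sub>1 * l ^ N) * r ^ N"
      using C\<^sub>0 C C\<^sub>1 r l(1)
      by (intro mult_mono mult_right_mono mult_nonneg_nonneg prod_nonneg) auto
    also have "\<dots> = K * (l ^ 3 * r) ^ N"
      by (simp add: K_def power_mult_distrib power_mult[symmetric] mult.commute[of _ 3]
          eval_nat_numeral algebra_simps)
    finally show ?thesis unfolding N_def .
  qed
  have "(\<lambda>m. K * (l ^ 3 * r) ^ (\<Sum>i<d. m i)) summable_on multi_index d"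
    using summable_on_power_multi_index[of "l ^ 3 * r"] l r by (intro summable_on_cmult_right) auto
  then show ?thesis
    by (rule summable_on_comparison_test) (use bound r in \<open>auto intro!: mult_nonneg_nonneg add_nonneg_nonneg sum_nonneg\<close>)
qed

lemma lauricella_coeff_fun_upd_Suc:
  assumes \<gamma>: "\<forall>N. \<gamma> \<noteq> - of_nat N" and "j < d"
  shows "lauricella_coeff d \<alpha> \<beta> \<gamma> (m(j := Suc (m j))) * of_nat (Suc (m j))
    = lauricella_coeff d \<alpha> \<beta> \<gamma> m * (\<alpha> + of_nat (\<Sum>i<d. m i)) * (\<beta> j + of_nat (m j))
        / (\<gamma> + of_nat (\<Sum>i<d. m i))"
proof -
  define N where "N = (\<Sum>i<d. m i)"
  have j: "j \<in> {..<d}" using \<open>j < d\<close> by simp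
  have sum_Suc: "(\<Sum>i<d. (m(j := Suc (m j))) i) = Suc N"
    using sum_fun_upd_remove[OF _ j, of m] sum.remove[OF _ j, of m] unfolding N_def by simp
  have prod_Suc: "(\<Prod>i<d. g i ((m(j := Suc (m j))) i)) = (\<Prod>i<d. g i (m i)) * c"
    if "g j (Suc (m j)) = g j (m j) * c" for g :: "nat \<Rightarrow> nat \<Rightarrow> complex" and c
    using prod_fun_upd_remove[OF _ j, of g m] prod.remove[OF _ j, of "\<lambda>i. g i (m i)"] that
    by (simp add: ac_simps)
  have beta_Suc: "(\<Prod>i<d. pochhammer (\<beta> i) ((m(j := Suc (m j))) i))
      = (\<Prod>i<d. pochhammer (\<beta> i) (m i)) * (\<beta> j + of_nat (m j))"
    by (rule prod_Suc) (simp add: pochhammer_Suc)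
  have fact_Suc: "(\<Prod>i<d. fact ((m(j := Suc (m j))) i)) = (\<Prod>i<d. fact (m i)) * (of_nat (Suc (m j)) :: complex)"
    by (rule prod_Suc) (simp add: mult.commute)
  have "pochhammer \<gamma> N \<noteq> 0" "\<gamma> + of_nat N \<noteq> 0"
    using \<gamma> by (auto simp: pochhammer_eq_0_iff eq_neg_iff_add_eq_0[symmetric])
  moreover have "(\<Prod>i<d. fact (m i) :: complex) \<noteq> 0" "(of_nat (Suc (m j)) :: complex) \<noteq> 0"
    by (simp_all del: of_nat_Suc)
  moreover have "pa * a * (P * b) / (pg * c * (F * s)) * s = pa * P / (pg * F) * a * b / c"
    if "pg \<noteq> 0" "c \<noteq> 0" "F \<noteq> 0" "s \<noteq> 0" for pa a P b pg c F s :: complex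
    using that by (simp add: divide_simps)
  ultimately show ?thesis
    unfolding lauricella_coeff_def sum_Suc beta_Suc fact_Suc pochhammer_Suc N_def[symmetric]
    by blast
qed

lemma lauricella_coeff_permute:
  assumes \<sigma>: "\<sigma> permutes {..<d}"
  shows "lauricella_coeff d \<alpha> (\<beta> \<circ> \<sigma>) \<gamma> (m \<circ> \<sigma>) = lauricella_coeff d \<alpha> \<beta> \<gamma> m"
proof -
  have "(\<Sum>i<d. (m \<circ> \<sigma>) i) = (\<Sum>i<d. m i)"
    using sum.permute[OF \<sigma>, of m] by simp
  moreover have prod_eq: "(\<Prod>i<d. f (\<sigma> i) ((m \<circ> \<sigma>) i)) = (\<Prod>i<d. f i (m i))" for f :: "nat \<Rightarrow> nat \<Rightarrow> complex"
    using prod.permute[OF \<sigma>, of "\<lambda>i. f i (m i)"] by simp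
  ultimately show ?thesis
    unfolding lauricella_coeff_def using prod_eq[of "\<lambda>i. pochhammer (\<beta> i)"] prod_eq[of "\<lambda>_. fact"]
    by (simp add: o_def)
qed

lemma lauricella_FD_permute:
  assumes \<sigma>: "\<sigma> permutes {..<d}"
  shows "lauricella_FD d \<alpha> (\<beta> \<circ> \<sigma>) \<gamma> (x \<circ> \<sigma>) = lauricella_FD d \<alpha> \<beta> \<gamma> x"
  unfolding lauricella_FD_altdef
proof (rule infsum_reindex_bij_witness[where i = "\<lambda>m. m \<circ> \<sigma>" and j = "\<lambda>m. m \<circ> inv \<sigma>"])
  have fix_outside: "\<sigma> i = i" "inv \<sigma> i = i" if "i \<ge> d" for i
    using that permutes_not_in[OF \<sigma>] permutes_not_in[OF permutes_inv[OF \<sigma>]] by auto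
  fix m assume m: "m \<in> multi_index d"
  show "m \<circ> inv \<sigma> \<circ> \<sigma> = m" "m \<circ> \<sigma> \<circ> inv \<sigma> = m"
    using permutes_inverses[OF \<sigma>] by (auto simp: fun_eq_iff)
  show "m \<circ> inv \<sigma> \<in> multi_index d" "m \<circ> \<sigma> \<in> multi_index d"
    using m fix_outside by (auto simp: multi_index_def)
  have "multi_power d x (m \<circ> inv \<sigma>) = multi_power d (x \<circ> \<sigma>) m"
    using prod.permute[OF \<sigma>, of "\<lambda>i. x i ^ m (inv \<sigma> i)"]
    by (simp add: multi_power_def permutes_inverses[OF \<sigma>])
  moreover have "lauricella_coeff d \<alpha> \<beta> \<gamma> (m \<circ> inv \<sigma>) = lauricella_coeff d \<alpha> (\<beta> \<circ> \<sigma>) \<gamma> m"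
    using lauricella_coeff_permute[OF \<sigma>, of \<alpha> \<beta> \<gamma> "m \<circ> inv \<sigma>"] \<open>m \<circ> inv \<sigma> \<circ> \<sigma> = m\<close>
    by simp
  ultimately show "lauricella_coeff d \<alpha> \<beta> \<gamma> (m \<circ> inv \<sigma>) * multi_power d x (m \<circ> inv \<sigma>)
      = lauricella_coeff d \<alpha> (\<beta> \<circ> \<sigma>) \<gamma> m * multi_power d (x \<circ> \<sigma>) m"
    by simp
qed

lemma lauricella_FD_cong:
  assumes "\<And>i. i < d \<Longrightarrow> x i = y i"
  shows "lauricella_FD d \<alpha> \<beta> \<gamma> x = lauricella_FD d \<alpha> \<beta> \<gamma> y"
  unfolding lauricella_FD_altdef multi_power_def using assms by (intro infsum_cong prod.cong) auto

lemma lauricella_FD_Suc_fun_upd_zero: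
  "lauricella_FD (Suc d) \<alpha> \<beta> \<gamma> (x(d := 0)) = lauricella_FD d \<alpha> \<beta> \<gamma> x"
  unfolding lauricella_FD_altdef
proof (rule infsum_cong_neutral)
  fix m assume "m \<in> multi_index (Suc d) - multi_index d"
  then obtain i where "i \<ge> d" "m i \<noteq> 0" "\<forall>i\<ge>Suc d. m i = 0"
    by (auto simp: multi_index_def)
  then have "m d \<noteq> 0" by (metis Suc_leI le_neq_implies_less)
  then show "lauricella_coeff (Suc d) \<alpha> \<beta> \<gamma> m * multi_power (Suc d) (x(d := 0)) m = 0"
    by (simp add: multi_power_def)
next
  fix m assume "m \<in> multi_index (Suc d) \<inter> multi_index d"
  then have "m d = 0" by (simp add: multi_index_def)
  then show "lauricella_coeff (Suc d) \<alpha> \<beta> \<gamma> m * multi_power (Suc d) (x(d := 0)) m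
      = lauricella_coeff d \<alpha> \<beta> \<gamma> m * multi_power d x m"
    by (simp add: lauricella_coeff_def multi_power_def)
qed (auto simp: multi_index_def)

section \<open>Homogeneity\<close>

lemma norm_lauricella_terms_le:
  fixes u :: "nat \<Rightarrow> complex" and m :: "nat \<Rightarrow> nat" and \<alpha> \<gamma> :: complex and \<beta> :: "nat \<Rightarrow> complex"
  assumes u: "\<And>i. i < d \<Longrightarrow> norm (u i) \<le> 1/2"
  defines "c \<equiv> lauricella_coeff d \<alpha> \<beta> \<gamma> m" and "N \<equiv> \<Sum>i<d. m i"
  shows "norm (c * multi_power d u m) \<le> norm c * (real N + 1) * (1/2) ^ N"
    and "norm (of_nat N * (c * multi_power d u m)) \<le> norm c * (real N + 1) * (1/2) ^ N"
    and "j < d \<Longrightarrow> norm (c * of_nat (m j) * multi_power d u (m(j := m j - 1)))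
                    \<le> 2 * (norm c * (real N + 1) * (1/2) ^ N)"
proof -
  have power_le: "norm (multi_power d u m') \<le> (1/2) ^ (\<Sum>i<d. m' i)" for m'
    using u by (rule norm_multi_power_le)
  have power: "norm (c * multi_power d u m) \<le> norm c * (1/2) ^ N"
    unfolding norm_mult N_def by (intro mult_left_mono power_le) auto
  also have "\<dots> \<le> norm c * (real N + 1) * (1/2) ^ N"
    using mult_left_mono[of 1 "real N + 1" "norm c * (1/2) ^ N"] by (simp add: ac_simps)
  finally show "norm (c * multi_power d u m) \<le> norm c * (real N + 1) * (1/2) ^ N" .
  have "norm (of_nat N * (c * multi_power d u m)) = real N * norm (c * multi_power d u m)"
    by (simp only: norm_mult norm_of_nat)
  also have "\<dots> \<le> (real N + 1) * (norm c * (1/2) ^ N)"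
    using power by (intro mult_mono) auto
  finally show "norm (of_nat N * (c * multi_power d u m)) \<le> norm c * (real N + 1) * (1/2) ^ N"
    by (simp add: ac_simps)
  assume "j < d"
  show "norm (c * of_nat (m j) * multi_power d u (m(j := m j - 1))) \<le> 2 * (norm c * (real N + 1) * (1/2) ^ N)"
  proof (cases "m j = 0")
    case False
    define N' where "N' = (\<Sum>i<d. (m(j := m j - 1)) i)"
    have "N = N' + 1" "m j \<le> N"
      using False sum_fun_upd_remove[of "{..<d}" j m "m j - 1"] sum.remove[of "{..<d}" j m] \<open>j < d\<close>
      by (simp_all add: N_def N'_def member_le_sum)
    then have "(1/2::real) ^ N' \<le> 2 * (1/2) ^ N" and "real (m j) \<le> real N + 1"
      by simp_all
    then have "norm (c * of_nat (m j) * multi_power d u (m(j := m j - 1)))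
        \<le> norm c * (real N + 1) * (2 * (1/2) ^ N)"
      unfolding norm_mult using power_le[of "m(j := m j - 1)"]
      by (intro mult_mono order.trans[OF _ \<open>(1/2::real) ^ N' \<le> _\<close>]) (auto simp: N'_def)
    then show ?thesis by (simp add: ac_simps)
  qed simp
qed

lemma lauricella_coeff_contiguity_sum:
  assumes \<gamma>: "\<forall>N. \<gamma> \<noteq> - of_nat N" and \<beta>: "(\<Sum>i<d. \<beta> i) = \<gamma>"
  shows "(\<Sum>j<d. lauricella_coeff d \<alpha> \<beta> \<gamma> (m(j := Suc (m j))) * of_nat (Suc (m j)))
    = (\<alpha> + of_nat (\<Sum>i<d. m i)) * lauricella_coeff d \<alpha> \<beta> \<gamma> m"
proof -
  define N where "N = (\<Sum>i<d. m i)"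
  define q where "q = lauricella_coeff d \<alpha> \<beta> \<gamma> m * (\<alpha> + of_nat N) / (\<gamma> + of_nat N)"
  have "(\<Sum>j<d. lauricella_coeff d \<alpha> \<beta> \<gamma> (m(j := Suc (m j))) * of_nat (Suc (m j)))
      = (\<Sum>j<d. q * (\<beta> j + of_nat (m j)))"
    using lauricella_coeff_fun_upd_Suc[OF \<gamma>] by (simp add: q_def N_def del: of_nat_Suc)
  also have "\<dots> = q * (\<gamma> + of_nat N)"
    using \<beta> by (simp add: sum_distrib_left[symmetric] sum.distrib N_def)
  also have "\<dots> = (\<alpha> + of_nat N) * lauricella_coeff d \<alpha> \<beta> \<gamma> m"
    using \<gamma> eq_neg_iff_add_eq_0[of \<gamma> "of_nat N"] by (simp add: q_def)
  finally show ?thesis unfolding N_def .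
qed

lemma lauricella_FD_euler_equation:
  fixes w :: "nat \<Rightarrow> complex"
  assumes \<gamma>: "\<forall>N. \<gamma> \<noteq> - of_nat N" and \<beta>: "(\<Sum>i<d. \<beta> i) = \<gamma>"
    and u: "\<And>i. i < d \<Longrightarrow> norm (1 - t * w i) \<le> 1/2"
    and D: "((\<lambda>m. lauricella_coeff d \<alpha> \<beta> \<gamma> m
              * (\<Sum>j<d. - of_nat (m j) * w j * multi_power d (\<lambda>i. 1 - t * w i) (m(j := m j - 1))))
            has_sum G') (multi_index d)"
  shows "t * G' = - \<alpha> * lauricella_FD d \<alpha> \<beta> \<gamma> (\<lambda>i. 1 - t * w i)"
proof -
  define u where "u = (\<lambda>i. 1 - t * w i)"
  define c where "c = lauricella_coeff d \<alpha> \<beta> \<gamma>"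
  define N where "N m = (\<Sum>i<d. m i)" for m :: "nat \<Rightarrow> nat"
  define Y where "Y = (\<lambda>m. c m * multi_power d u m)"
  define E where "E j m = c m * of_nat (m j) * multi_power d u (m(j := m j - 1))" for j m
  define W where "W = (\<lambda>m. norm (c m) * (real (N m) + 1) * (1/2) ^ N m)"
  have W: "W summable_on multi_index d" "(\<lambda>m. 2 * W m) summable_on multi_index d"
    using summable_on_lauricella_coeff[of "1/2" d \<alpha> \<beta> \<gamma>]
    by (simp_all add: W_def c_def N_def summable_on_cmult_right)
  have u': "\<And>i. i < d \<Longrightarrow> norm (u i) \<le> 1/2" using u by (simp add: u_def)
  note bounds = norm_lauricella_terms_le[where u = u and d = d and \<alpha> = \<alpha> and \<beta> = \<beta> and \<gamma> = \<gamma>]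
  have "Y summable_on multi_index d"
    by (rule summable_on_norm_bound[OF W(1)]) (use bounds(1)[OF u'] in \<open>simp add: Y_def W_def c_def N_def\<close>)
  then have hY: "(Y has_sum lauricella_FD d \<alpha> \<beta> \<gamma> u) (multi_index d)"
    by (simp add: lauricella_FD_altdef Y_def c_def)
  define S where "S = (\<Sum>\<^sub>\<infinity>m\<in>multi_index d. of_nat (N m) * Y m)"
  have "(\<lambda>m. of_nat (N m) * Y m) summable_on multi_index d"
    by (rule summable_on_norm_bound[OF W(1)]) (use bounds(2)[OF u'] in \<open>simp add: Y_def W_def c_def N_def\<close>)
  then have hN: "((\<lambda>m. of_nat (N m) * Y m) has_sum S) (multi_index d)"
    by (simp add: S_def)
  define T where "T j = (\<Sum>\<^sub>\<infinity>m\<in>multi_index d. E j m)" for j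
  have "E j summable_on multi_index d" if "j < d" for j
    by (rule summable_on_norm_bound[OF W(2)]) (use bounds(3)[OF u' that] in \<open>simp add: E_def W_def c_def N_def\<close>)
  then have hE: "(E j has_sum T j) (multi_index d)" if "j < d" for j
    using that by (simp add: T_def)
  have "t * G' = S - (\<Sum>j<d. T j)"
  proof (rule has_sum_unique)
    show "((\<lambda>m. of_nat (N m) * Y m - (\<Sum>j<d. E j m)) has_sum (S - (\<Sum>j<d. T j))) (multi_index d)"
      using hN hE by (intro has_sum_diff has_sum_sum) auto
    have "t * (c m * (\<Sum>j<d. - of_nat (m j) * w j * multi_power d u (m(j := m j - 1))))
        = of_nat (N m) * Y m - (\<Sum>j<d. E j m)" for m
      using arg_cong[OF euler_operator_multi_power_affine[where t = t and w = w and d = d and m = m],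
          of "(*) (c m)"]
      by (simp add: Y_def E_def N_def u_def right_diff_distrib sum_distrib_left ac_simps)
    then show "((\<lambda>m. of_nat (N m) * Y m - (\<Sum>j<d. E j m)) has_sum t * G') (multi_index d)"
      using has_sum_cmult_right[OF D, of t] by (simp add: c_def u_def)
  qed
  (* shift m j by one in T j, then sum the contiguity relation over j *)
  moreover have "(\<Sum>j<d. T j) = \<alpha> * lauricella_FD d \<alpha> \<beta> \<gamma> u + S"
  proof (rule has_sum_unique)
    have "((\<lambda>m. E j (m(j := Suc (m j)))) has_sum T j) (multi_index d)" if "j < d" for j
      using hE[OF that] has_sum_multi_index_shift[OF that, of "E j"] by (simp add: E_def)
    then show "((\<lambda>m. \<Sum>j<d. E j (m(j := Suc (m j)))) has_sum (\<Sum>j<d. T j)) (multi_index d)"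
      by (intro has_sum_sum) auto
    have "(\<Sum>j<d. E j (m(j := Suc (m j)))) = \<alpha> * Y m + of_nat (N m) * Y m" for m
    proof -
      have "(\<Sum>j<d. E j (m(j := Suc (m j))))
          = (\<Sum>j<d. c (m(j := Suc (m j))) * of_nat (Suc (m j))) * multi_power d u m"
        by (simp add: E_def sum_distrib_right del: of_nat_Suc)
      also have "\<dots> = (\<alpha> + of_nat (N m)) * Y m"
        using lauricella_coeff_contiguity_sum[OF \<gamma> \<beta>, of \<alpha> m] by (simp add: Y_def c_def N_def)
      finally show ?thesis by (simp only: distrib_right)
    qed
    then show "((\<lambda>m. \<Sum>j<d. E j (m(j := Suc (m j)))) has_sum \<alpha> * lauricella_FD d \<alpha> \<beta> \<gamma> u + S)
        (multi_index d)"
      using has_sum_add[OF has_sum_cmult_right[OF hY] hN] by simp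
  qed
  ultimately show ?thesis by (simp add: u_def)
qed

lemma has_field_derivative_lauricella_FD_affine:
  fixes w :: "nat \<Rightarrow> complex"
  assumes \<gamma>: "\<forall>N. \<gamma> \<noteq> - of_nat N" and \<beta>: "(\<Sum>i<d. \<beta> i) = \<gamma>"
    and w: "\<And>i. i < d \<Longrightarrow> norm (1 - w i) < 1/8" and s: "s \<in> ball 1 (1/4)"
  shows "((\<lambda>s. lauricella_FD d \<alpha> \<beta> \<gamma> (\<lambda>i. 1 - s * w i)) has_field_derivative
           - \<alpha> * lauricella_FD d \<alpha> \<beta> \<gamma> (\<lambda>i. 1 - s * w i) / s) (at s)"
proof -
  define c where "c = lauricella_coeff d \<alpha> \<beta> \<gamma>"
  define f where "f = (\<lambda>m s. c m * multi_power d (\<lambda>i. 1 - s * w i) m)"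
  define f' where "f' = (\<lambda>m s. c m * (\<Sum>j<d. - of_nat (m j) * w j
                            * multi_power d (\<lambda>i. 1 - s * w i) (m(j := m j - 1))))"
  define g where "g = (\<lambda>s. lauricella_FD d \<alpha> \<beta> \<gamma> (\<lambda>i. 1 - s * w i))"
  have near: "norm (1 - s * w i) \<le> 1/2" if "s \<in> cball 1 (1/4)" "i < d" for s i
    using that w[of i] by (intro norm_one_minus_mult_le_half) (auto simp: dist_norm)
  have "(\<lambda>m. norm (c m) * (real (\<Sum>i<d. m i) + 1) * (1/2) ^ (\<Sum>i<d. m i)) summable_on multi_index d"
    unfolding c_def by (rule summable_on_lauricella_coeff) auto
  moreover have "norm (f m s') \<le> norm (c m) * (real (\<Sum>i<d. m i) + 1) * (1/2) ^ (\<Sum>i<d. m i)"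
    if "s' \<in> cball 1 (1/4)" for m s'
    unfolding f_def c_def using near[OF that] by (rule norm_lauricella_terms_le)
  moreover have "continuous_on (cball 1 (1/4)) (f m)" for m
    unfolding f_def multi_power_def by (intro continuous_intros)
  moreover have "(f m has_field_derivative f' m s') (at s')" for m s'
    unfolding f_def f'_def by (intro DERIV_cmult has_field_derivative_multi_power_affine)
  ultimately have "(\<lambda>m. f' m s) summable_on multi_index d"
    and "((\<lambda>s. \<Sum>\<^sub>\<infinity>m\<in>multi_index d. f m s) has_field_derivative (\<Sum>\<^sub>\<infinity>m\<in>multi_index d. f' m s)) (at s)"
    using has_field_derivative_infsum[where f = f and f' = f' and z = 1 and r = "1/4"] s by auto
  moreover have "(\<lambda>s. \<Sum>\<^sub>\<infinity>m\<in>multi_index d. f m s) = g"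
    by (simp add: g_def f_def c_def lauricella_FD_altdef fun_eq_iff)
  ultimately have "(\<lambda>m. f' m s) summable_on multi_index d"
    and deriv: "(g has_field_derivative (\<Sum>\<^sub>\<infinity>m\<in>multi_index d. f' m s)) (at s)"
    by simp_all
  then have "s * (\<Sum>\<^sub>\<infinity>m\<in>multi_index d. f' m s) = - \<alpha> * g s"
    unfolding g_def using s near
    by (intro lauricella_FD_euler_equation[OF \<gamma> \<beta>]) (auto simp: f'_def c_def)
  moreover have "s \<noteq> 0" using s by (auto simp: dist_norm)
  ultimately have "(\<Sum>\<^sub>\<infinity>m\<in>multi_index d. f' m s) = - \<alpha> * g s / s"
    by (simp add: field_simps)
  with deriv show ?thesis by (simp add: g_def)
qed

lemma euler_equation_solution:
  fixes g :: "complex \<Rightarrow> complex"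
  assumes "r \<le> 1" and ode: "\<And>s. s \<in> ball 1 r \<Longrightarrow> (g has_field_derivative - \<alpha> * g s / s) (at s)"
    and t: "t \<in> ball 1 r"
  shows "g t = t powr (- \<alpha>) * g 1"
proof -
  define h where "h s = s powr \<alpha> * g s" for s
  have "(h has_field_derivative 0) (at s within ball 1 r)" if s: "s \<in> ball 1 r" for s
  proof -
    have "Re s > 0"
      using s \<open>r \<le> 1\<close> abs_Re_le_cmod[of "1 - s"] by (auto simp: dist_norm)
    then have "s \<notin> \<real>\<^sub>\<le>\<^sub>0" "s \<noteq> 0" by (auto simp: complex_nonpos_Reals_iff)
    have "(h has_field_derivative (\<alpha> * s powr (\<alpha> - 1) * g s + - \<alpha> * g s / s * s powr \<alpha>)) (at s)"
      unfolding h_def by (rule DERIV_mult has_field_derivative_powr ode \<open>s \<notin> \<real>\<^sub>\<le>\<^sub>0\<close> s)+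
    moreover have "s powr (\<alpha> - 1) = s powr \<alpha> / s"
      using \<open>s \<noteq> 0\<close> powr_nat'[of s 1] by (simp add: powr_diff)
    ultimately show ?thesis
      by (simp add: has_field_derivative_at_within)
  qed
  then obtain C where C: "\<And>s. s \<in> ball 1 r \<Longrightarrow> h s = C"
    using has_field_derivative_zero_constant[OF convex_ball] by blast
  have "r > 0" using t by (metis mem_ball zero_le_dist le_less_trans)
  then have "1 \<in> ball 1 r" by simp
  then have invariant: "t powr \<alpha> * g t = g 1"
    using C[of t] C[of 1] t by (simp add: h_def)
  have "t \<noteq> 0" using t \<open>r \<le> 1\<close> by (auto simp: dist_norm)
  then have "t powr (- \<alpha>) * t powr \<alpha> = 1"
    by (simp add: powr_def exp_add[symmetric])
  then have "g t = t powr (- \<alpha>) * (t powr \<alpha> * g t)"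
    by (simp add: mult.assoc[symmetric])
  then show ?thesis
    unfolding invariant .
qed

lemma lauricella_FD_homogeneous:
  fixes w :: "nat \<Rightarrow> complex"
  assumes "\<forall>N. \<gamma> \<noteq> - of_nat N" "(\<Sum>i<d. \<beta> i) = \<gamma>"
    and "\<And>i. i < d \<Longrightarrow> norm (1 - w i) < 1/8" and "norm (1 - t) < 1/4"
  shows "lauricella_FD d \<alpha> \<beta> \<gamma> (\<lambda>i. 1 - t * w i)
           = t powr (- \<alpha>) * lauricella_FD d \<alpha> \<beta> \<gamma> (\<lambda>i. 1 - w i)"
proof -
  have "t \<in> ball 1 (1/4)" using assms(4) by (simp add: dist_norm)
  from euler_equation_solution[where g = "\<lambda>s. lauricella_FD d \<alpha> \<beta> \<gamma> (\<lambda>i. 1 - s * w i)",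
      OF _ has_field_derivative_lauricella_FD_affine[OF assms(1-3)] this]
  show ?thesis by simp
qed

section \<open>Symmetry of phi\<close>

lemma phi_eq_symmetric_form:
  assumes "n \<ge> 1" and \<gamma>: "\<forall>N. of_nat n * k \<noteq> - of_nat N" and z: "\<And>i. i < n \<Longrightarrow> \<bar>z i - 1\<bar> < 1/8"
  shows "phi n \<nu> k z = of_real (\<Prod>i<n. z i) powr (- \<nu> / of_nat n)
           * lauricella_FD n (- \<nu>) (\<lambda>_. k) (of_nat n * k) (\<lambda>i. 1 - of_real (z i))"
proof -
  obtain d where n: "n = Suc d" using \<open>n \<ge> 1\<close> by (cases n) auto
  define c where "c = z d"
  define t where "t = complex_of_real (1 / c)"
  have z_pos: "z i > 0" if "i < n" for i using z[OF that] by linarith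
  have c: "\<bar>c - 1\<bar> < 1/8" "c > 0" using z[of d] z_pos[of d] by (simp_all add: n c_def)
  have t: "norm (1 - t) < 1/4"
    unfolding t_def using c(1) by (rule norm_one_minus_inverse_lt)
  have "lauricella_FD d (- \<nu>) (\<lambda>_. k) (of_nat n * k) (\<lambda>i. of_real (1 - z i / c))
      = lauricella_FD n (- \<nu>) (\<lambda>_. k) (of_nat n * k) ((\<lambda>i. of_real (1 - z i / c))(d := 0))"
    by (simp add: n lauricella_FD_Suc_fun_upd_zero)
  also have "\<dots> = lauricella_FD n (- \<nu>) (\<lambda>_. k) (of_nat n * k) (\<lambda>i. 1 - t * of_real (z i))"
    using c by (intro lauricella_FD_cong) (auto simp: t_def c_def)
  also have "\<dots> = t powr \<nu> * lauricella_FD n (- \<nu>) (\<lambda>_. k) (of_nat n * k) (\<lambda>i. 1 - of_real (z i))"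
  proof -
    have "norm (1 - complex_of_real (z i)) < 1/8" if "i < n" for i
      using z[OF that] norm_of_real[of "1 - z i", where 'a = complex] by (simp add: abs_minus_commute)
    then show ?thesis
      using lauricella_FD_homogeneous[where d = n and \<beta> = "\<lambda>_. k" and \<gamma> = "of_nat n * k"
        and w = "\<lambda>i. of_real (z i)" and t = t and \<alpha> = "- \<nu>"] \<gamma> z t
      by simp
  qed
  finally have FD: "lauricella_FD d (- \<nu>) (\<lambda>_. k) (of_nat n * k) (\<lambda>i. of_real (1 - z i / c))
      = t powr \<nu> * lauricella_FD n (- \<nu>) (\<lambda>_. k) (of_nat n * k) (\<lambda>i. 1 - of_real (z i))" .
  have prod_eq: "(\<Prod>i<d. z i / c) = (\<Prod>i<n. z i) / c ^ n"
    using c(2) by (simp add: n prod_dividef c_def[symmetric])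
  have "(\<Prod>i<n. z i) > 0" using z_pos by (intro prod_pos) auto
  then have prefactor: "of_real (\<Prod>i<d. z i / c) powr (- \<nu> / of_nat n) * t powr \<nu>
      = of_real (\<Prod>i<n. z i) powr (- \<nu> / of_nat n)"
    unfolding t_def prod_eq by (rule powr_of_real_div_power_cancel[OF _ c(2)]) (simp add: n)
  have "n - 1 = d" using n by simp
  then show ?thesis
    unfolding phi_def \<open>n - 1 = d\<close> c_def[symmetric] FD by (simp only: mult.assoc[symmetric] prefactor)
qed

theorem lemma2p1:
  fixes n :: nat and \<nu> k :: complex and \<sigma> :: "nat \<Rightarrow> nat"
  assumes "n \<ge> 2"
    and "\<forall>j::nat. of_nat n * k \<noteq> - of_nat j"
    and "\<sigma> permutes {..<n}"
  shows "\<exists>\<epsilon>>0. \<forall>z :: nat \<Rightarrow> real. (\<forall>i<n. \<bar>z i - 1\<bar> < \<epsilon>) \<longrightarrow>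
           phi n \<nu> k (z \<circ> \<sigma>) = phi n \<nu> k z"
proof (intro exI[of _ "1/8"] conjI allI impI)
  fix z :: "nat \<Rightarrow> real"
  assume z: "\<forall>i<n. \<bar>z i - 1\<bar> < 1/8"
  have "\<bar>(z \<circ> \<sigma>) i - 1\<bar> < 1/8" if "i < n" for i
    using z permutes_in_image[OF assms(3), of i] that by simp
  moreover have "(\<Prod>i<n. (z \<circ> \<sigma>) i) = (\<Prod>i<n. z i)"
    using prod.permute[OF assms(3), of z] by simp
  moreover have "lauricella_FD n (- \<nu>) (\<lambda>_. k) (of_nat n * k) (\<lambda>i. 1 - of_real ((z \<circ> \<sigma>) i))
      = lauricella_FD n (- \<nu>) (\<lambda>_. k) (of_nat n * k) (\<lambda>i. 1 - of_real (z i))"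
    using lauricella_FD_permute[OF assms(3), of "- \<nu>" "\<lambda>_. k" _ "\<lambda>i. 1 - of_real (z i)"]
    by (simp add: o_def)
  ultimately show "phi n \<nu> k (z \<circ> \<sigma>) = phi n \<nu> k z"
    using assms(1,2) z by (simp add: phi_eq_symmetric_form)
qed simp

end
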